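(* Let $T>0$, $\gamma\in(0,1]$, $C_T=\{(t,s):0<s<t<T\}$, and let $g_1,g_2$ be Hölder continuous functions of order $\gamma$ on $C_T$. Define, for $(t,s)\in C_T$, $$h(t,s)=\int_s^t\frac{g_1(t,z)\,g_2(z,s)}{\sqrt{t-z}\,\sqrt{z-s}}\,dz.$$ Then $h$ is Hölder continuous of order $\gamma$ on $C_T$. *)

theory Defs
  imports "HOL-Analysis.Analysis"
begin

definition CT :: "real \<Rightarrow> (real \<times> real) set" where
  "CT T = {(t, s). 0 < s \<and> s < t \<and> t < T}"

definition holder_on :: "real \<Rightarrow> (real \<times> real) set \<Rightarrow> (real \<times> real \<Rightarrow> real) \<Rightarrow> bool" where
  "holder_on \<gamma> S f \<longleftrightarrow> (\<exists>K. \<forall>x\<in>S. \<forall>y\<in>S. \<bar>f x - f y\<bar> \<le> K * dist x y powr \<gamma>)"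

end

theory Submission
  imports Defs
begin

text \<open>The substitution \<open>z = s + (t - s) u\<close> turns \<open>h(t,s)\<close> into the integral over \<open>0 < u < 1\<close>
  of \<open>g\<^sub>1(t,z) g\<^sub>2(z,s)\<close> against the fixed arcsine weight \<open>1/\<surd>(u(1-u))\<close>, which is integrable.
  For fixed \<open>u\<close> the points \<open>(t,z)\<close> and \<open>(z,s)\<close> depend 2-Lipschitz on \<open>(t,s)\<close> and stay in \<open>C\<^sub>T\<close>,
  and Hoelder functions on the bounded set \<open>C\<^sub>T\<close> are bounded, so the integrand is Hoelder
  in \<open>(t,s)\<close> with a constant independent of \<open>u\<close>. Integrating this bound against the weight
  gives the Hoelder estimate for \<open>h\<close>.\<close>

definition holder_with :: "real \<Rightarrow> real \<Rightarrow> 'a::metric_space set \<Rightarrow> ('a \<Rightarrow> real) \<Rightarrow> bool" where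
  "holder_with K \<gamma> S f \<longleftrightarrow> 0 \<le> K \<and> (\<forall>x\<in>S. \<forall>y\<in>S. \<bar>f x - f y\<bar> \<le> K * dist x y powr \<gamma>)"

lemma holder_withD:
  "holder_with K \<gamma> S f \<Longrightarrow> x \<in> S \<Longrightarrow> y \<in> S \<Longrightarrow> \<bar>f x - f y\<bar> \<le> K * dist x y powr \<gamma>"
  unfolding holder_with_def by blast

lemma holder_with_nonneg: "holder_with K \<gamma> S f \<Longrightarrow> 0 \<le> K"
  unfolding holder_with_def by blast

lemma holder_with_cong:
  "(\<And>x. x \<in> S \<Longrightarrow> f x = g x) \<Longrightarrow> holder_with K \<gamma> S f \<longleftrightarrow> holder_with K \<gamma> S g"
  unfolding holder_with_def by simp

lemma holder_on_iff_holder_with: "holder_on \<gamma> S f \<longleftrightarrow> (\<exists>K. holder_with K \<gamma> S f)"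
proof
  assume "holder_on \<gamma> S f"
  then obtain K where K: "\<forall>x\<in>S. \<forall>y\<in>S. \<bar>f x - f y\<bar> \<le> K * dist x y powr \<gamma>"
    unfolding holder_on_def by blast
  have "K * dist x y powr \<gamma> \<le> max K 0 * dist x y powr \<gamma>" for x y
    by (intro mult_right_mono) auto
  with K have "holder_with (max K 0) \<gamma> S f"
    unfolding holder_with_def by (meson max.cobounded2 order_trans)
  then show "\<exists>K. holder_with K \<gamma> S f" ..
qed (auto simp: holder_on_def holder_with_def)

lemma holder_with_imp_continuous_on:
  assumes "holder_with K \<gamma> S f" "0 < \<gamma>"
  shows "continuous_on S f"
  unfolding continuous_on_def
proof
  fix x assume x: "x \<in> S"
  have bound: "\<forall>\<^sub>F y in at x within S. norm (f y - f x) \<le> K * dist y x powr \<gamma>"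
    using holder_withD[OF assms(1) _ x] by (auto simp: eventually_at_filter)
  have "((\<lambda>y. dist y x) \<longlongrightarrow> dist x x) (at x within S)"
    by (intro tendsto_intros)
  then have "((\<lambda>y. dist y x) \<longlongrightarrow> 0) (at x within S)"
    by simp
  then have "((\<lambda>y. K * dist y x powr \<gamma>) \<longlongrightarrow> 0) (at x within S)"
    by (intro tendsto_mult_right_zero tendsto_zero_powrI[OF _ tendsto_const]) (use assms(2) in auto)
  then have "((\<lambda>y. f y - f x) \<longlongrightarrow> 0) (at x within S)"
    by (rule Lim_null_comparison[OF bound])
  then show "(f \<longlongrightarrow> f x) (at x within S)"
    by (rule LIM_zero_cancel)
qed

lemma holder_with_imp_bounded:
  assumes "holder_with K \<gamma> S f" "bounded S" "0 \<le> \<gamma>"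
  obtains M where "0 \<le> M" "\<And>x. x \<in> S \<Longrightarrow> \<bar>f x\<bar> \<le> M"
proof (cases "S = {}")
  case False
  then obtain x0 where x0: "x0 \<in> S" by blast
  have "\<bar>f x\<bar> \<le> \<bar>f x0\<bar> + K * diameter S powr \<gamma>" if x: "x \<in> S" for x
  proof -
    have "dist x x0 powr \<gamma> \<le> diameter S powr \<gamma>"
      using diameter_bounded_bound[OF assms(2) x x0] assms(3) by (intro powr_mono2) auto
    then have "K * dist x x0 powr \<gamma> \<le> K * diameter S powr \<gamma>"
      using holder_with_nonneg[OF assms(1)] by (rule mult_left_mono)
    with holder_withD[OF assms(1) x x0] show ?thesis
      by linarith
  qed
  moreover have "0 \<le> \<bar>f x0\<bar> + K * diameter S powr \<gamma>"
    using holder_with_nonneg[OF assms(1)] by simp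
  ultimately show ?thesis
    using that by blast
qed (use that in auto)

lemma holder_with_compose_lipschitz:
  assumes f: "holder_with K \<gamma> S f" and \<phi>: "L-lipschitz_on A \<phi>" "\<phi> ` A \<subseteq> S" and "0 \<le> \<gamma>"
  shows "holder_with (K * L powr \<gamma>) \<gamma> A (f \<circ> \<phi>)"
  unfolding holder_with_def
proof (intro conjI ballI)
  have K: "0 \<le> K" and L: "0 \<le> L"
    using holder_with_nonneg[OF f] lipschitz_on_nonneg[OF \<phi>(1)] .
  then show "0 \<le> K * L powr \<gamma>" by simp
  fix x y assume x: "x \<in> A" and y: "y \<in> A"
  have "\<bar>(f \<circ> \<phi>) x - (f \<circ> \<phi>) y\<bar> \<le> K * dist (\<phi> x) (\<phi> y) powr \<gamma>"
    using holder_withD[OF f] \<phi>(2) x y by auto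
  also have "\<dots> \<le> K * (L * dist x y) powr \<gamma>"
    using lipschitz_onD[OF \<phi>(1) x y] K \<open>0 \<le> \<gamma>\<close> by (intro mult_left_mono powr_mono2) auto
  also have "\<dots> = K * L powr \<gamma> * dist x y powr \<gamma>"
    using L by (simp add: powr_mult)
  finally show "\<bar>(f \<circ> \<phi>) x - (f \<circ> \<phi>) y\<bar> \<le> K * L powr \<gamma> * dist x y powr \<gamma>" .
qed

lemma holder_with_mult:
  assumes f: "holder_with K\<^sub>f \<gamma> S f" and g: "holder_with K\<^sub>g \<gamma> S g"
    and Mf: "0 \<le> M\<^sub>f" "\<And>x. x \<in> S \<Longrightarrow> \<bar>f x\<bar> \<le> M\<^sub>f"
    and Mg: "0 \<le> M\<^sub>g" "\<And>x. x \<in> S \<Longrightarrow> \<bar>g x\<bar> \<le> M\<^sub>g"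
  shows "holder_with (K\<^sub>f * M\<^sub>g + M\<^sub>f * K\<^sub>g) \<gamma> S (\<lambda>x. f x * g x)"
  unfolding holder_with_def
proof (intro conjI ballI)
  show "0 \<le> K\<^sub>f * M\<^sub>g + M\<^sub>f * K\<^sub>g"
    using holder_with_nonneg[OF f] holder_with_nonneg[OF g] Mf(1) Mg(1) by simp
  fix x y assume x: "x \<in> S" and y: "y \<in> S"
  have "f x * g x - f y * g y = (f x - f y) * g x + f y * (g x - g y)"
    by (simp add: algebra_simps)
  then have "\<bar>f x * g x - f y * g y\<bar> \<le> \<bar>f x - f y\<bar> * \<bar>g x\<bar> + \<bar>f y\<bar> * \<bar>g x - g y\<bar>"
    by (metis abs_mult abs_triangle_ineq)
  also have "\<dots> \<le> K\<^sub>f * dist x y powr \<gamma> * M\<^sub>g + M\<^sub>f * (K\<^sub>g * dist x y powr \<gamma>)"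
    using holder_withD[OF f x y] holder_withD[OF g x y] Mf Mg x y
    by (intro add_mono mult_mono) auto
  finally show "\<bar>f x * g x - f y * g y\<bar> \<le> (K\<^sub>f * M\<^sub>g + M\<^sub>f * K\<^sub>g) * dist x y powr \<gamma>"
    by (simp add: algebra_simps)
qed

lemma holder_with_weighted_integral:
  assumes W: "W integrable_on A" "\<And>u. u \<in> A \<Longrightarrow> 0 \<le> W u"
    and int: "\<And>x. x \<in> S \<Longrightarrow> (\<lambda>u. F u x * W u) integrable_on A"
    and F: "\<And>u. u \<in> A \<Longrightarrow> holder_with K \<gamma> S (F u)" and "0 \<le> K"
  shows "holder_with (K * integral A W) \<gamma> S (\<lambda>x. integral A (\<lambda>u. F u x * W u))"
  unfolding holder_with_def
proof (intro conjI ballI)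
  show "0 \<le> K * integral A W"
    using \<open>0 \<le> K\<close> integral_nonneg[OF W] by simp
  fix x y assume x: "x \<in> S" and y: "y \<in> S"
  have pointwise: "\<bar>F u x * W u - F u y * W u\<bar> \<le> K * dist x y powr \<gamma> * W u" if "u \<in> A" for u
    using holder_withD[OF F[OF that] x y] W(2)[OF that]
    by (simp add: abs_mult left_diff_distrib[symmetric] mult_right_mono)
  have "\<bar>integral A (\<lambda>u. F u x * W u) - integral A (\<lambda>u. F u y * W u)\<bar>
        = \<bar>integral A (\<lambda>u. F u x * W u - F u y * W u)\<bar>"
    using integral_diff[OF int[OF x] int[OF y]] by simp
  also have "\<dots> \<le> integral A (\<lambda>u. K * dist x y powr \<gamma> * W u)"
    using integral_norm_bound_integral[OF integrable_diff[OF int[OF x] int[OF y]]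
        integrable_on_cmult_left[OF W(1)]] pointwise by simp
  also have "\<dots> = K * integral A W * dist x y powr \<gamma>"
    by (simp add: algebra_simps)
  finally show "\<bar>integral A (\<lambda>u. F u x * W u) - integral A (\<lambda>u. F u y * W u)\<bar>
      \<le> K * integral A W * dist x y powr \<gamma>" .
qed

lemma continuous_dominated_imp_integrable:
  fixes f :: "'a::euclidean_space \<Rightarrow> real"
  assumes "continuous_on S f" "S \<in> sets lebesgue" "g integrable_on S" "\<And>x. x \<in> S \<Longrightarrow> \<bar>f x\<bar> \<le> g x"
  shows "f integrable_on S"
  using measurable_bounded_by_integrable_imp_integrable_real
      [OF continuous_imp_measurable_on_sets_lebesgue[OF assms(1,2)] assms(3,4,2)] .

lemma arcsine_weight_has_integral: "((\<lambda>u. 1 / sqrt (u * (1 - u))) has_integral pi) {0..1}"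
proof -
  have "((\<lambda>u. 1 / sqrt (u * (1 - u))) has_integral arcsin (2 * 1 - 1) - arcsin (2 * 0 - 1)) {0..1}"
  proof (rule fundamental_theorem_of_calculus_interior)
    show "continuous_on {0..1} (\<lambda>u. arcsin (2 * u - 1))"
      by (intro continuous_intros) auto
    fix u :: real assume u: "u \<in> {0<..<1}"
    have "4 * (u * (1 - u)) = 1 - (2 * u - 1)\<^sup>2"
      by (simp add: power2_eq_square algebra_simps)
    then have "sqrt (1 - (2 * u - 1)\<^sup>2) = 2 * sqrt (u * (1 - u))"
      by (metis real_sqrt_four real_sqrt_mult)
    moreover have "-1 < 2 * u - 1" "2 * u - 1 < 1"
      using u by auto
    ultimately show "((\<lambda>u. arcsin (2 * u - 1)) has_vector_derivative 1 / sqrt (u * (1 - u))) (at u)"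
      unfolding has_real_derivative_iff_has_vector_derivative[symmetric]
      by (auto intro!: derivative_eq_intros simp: inverse_eq_divide)
  qed simp
  then show ?thesis by simp
qed

lemma arcsine_weight_integrable: "(\<lambda>u. 1 / sqrt (u * (1 - u))) integrable_on {0<..<1}"
  using arcsine_weight_has_integral integrable_on_open_interval_real by blast

lemma integral_arcsine_substitution:
  fixes F :: "real \<Rightarrow> real"
  assumes "s < t" and int: "(\<lambda>u. F (s + (t - s) * u) / sqrt (u * (1 - u))) integrable_on {0<..<1}"
  shows "integral {s..t} (\<lambda>z. F z / (sqrt (t - z) * sqrt (z - s)))
       = integral {0<..<1} (\<lambda>u. F (s + (t - s) * u) / sqrt (u * (1 - u)))"
    (is "integral _ ?f = integral _ ?G")
proof -
  have pullback: "?f ((t - s) *\<^sub>R u + s) = ?G u / (t - s)" for u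
  proof -
    have "sqrt (t - ((t - s) * u + s)) * sqrt ((t - s) * u + s - s) = sqrt ((t - s)\<^sup>2 * (u * (1 - u)))"
      by (simp add: real_sqrt_mult[symmetric] power2_eq_square algebra_simps)
    also have "\<dots> = (t - s) * sqrt (u * (1 - u))"
      using \<open>s < t\<close> by (simp add: real_sqrt_mult)
    finally show ?thesis
      by (simp add: algebra_simps)
  qed
  have "(?G has_integral integral {0..1} ?G) {0..1}"
    using int by (simp add: integrable_on_open_interval_real integrable_integral)
  from has_integral_divide[OF this, of "t - s"]
  have "((\<lambda>u. ?f ((t - s) *\<^sub>R u + s)) has_integral integral {0..1} ?G /\<^sub>R (t - s) ^ DIM(real))
      (cbox ((s - s) /\<^sub>R (t - s)) ((t - s) /\<^sub>R (t - s)))"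
    unfolding pullback using \<open>s < t\<close> by (simp add: divide_inverse_commute)
  then have "(?f has_integral integral {0..1} ?G) (cbox s t)"
    using has_integral_affinity_iff[of "t - s" ?f s "integral {0..1} ?G" s t] \<open>s < t\<close> by simp
  then show ?thesis
    using integral_open_interval_real[of 0 1 ?G] by (simp add: integral_unique)
qed

lemma bounded_CT: "bounded (CT T)"
  by (rule bounded_subset[OF bounded_cbox[of "(0, 0)" "(T, T)"]])
     (auto simp: CT_def cbox_Pair_eq)

lemma segment_points_in_CT:
  assumes "(t, s) \<in> CT T" "0 < u" "u < 1"
  shows "(t, s + (t - s) * u) \<in> CT T" "(s + (t - s) * u, s) \<in> CT T"
proof -
  have "0 < (t - s) * u" "(t - s) * u < t - s"
    using assms by (auto simp: CT_def)
  then show "(t, s + (t - s) * u) \<in> CT T" "(s + (t - s) * u, s) \<in> CT T"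
    using assms(1) by (auto simp: CT_def)
qed

lemma lipschitz_segment_points:
  fixes u :: real
  assumes "0 \<le> u" "u \<le> 1"
  shows "2-lipschitz_on UNIV (\<lambda>(t, s). (t, s + (t - s) * u))"
    and "2-lipschitz_on UNIV (\<lambda>(t, s). (s + (t - s) * u, s))"
proof -
  have dist_le: "dist (a, b) (c, d) \<le> \<bar>a - c\<bar> + \<bar>b - d\<bar>" for a b c d :: real
    unfolding dist_Pair_Pair dist_real_def power2_abs by (rule sqrt_sum_squares_le_sum_abs)
  have fraction_le: "\<bar>(s + (t - s) * u) - (s' + (t' - s') * u)\<bar> \<le> dist (t, s) (t', s')" for t s t' s'
  proof -
    have "\<bar>(s + (t - s) * u) - (s' + (t' - s') * u)\<bar> = \<bar>(1 - u) * (s - s') + u * (t - t')\<bar>"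
      by (simp add: algebra_simps)
    also have "\<dots> \<le> (1 - u) * \<bar>s - s'\<bar> + u * \<bar>t - t'\<bar>"
      using assms by (metis abs_mult abs_of_nonneg abs_triangle_ineq diff_ge_0_iff_ge)
    also have "\<dots> \<le> (1 - u) * dist (t, s) (t', s') + u * dist (t, s) (t', s')"
      using assms dist_fst_le[of "(t, s)" "(t', s')"] dist_snd_le[of "(t, s)" "(t', s')"]
      by (intro add_mono mult_left_mono) (auto simp: dist_real_def)
    finally show ?thesis by (simp add: algebra_simps)
  qed
  show "2-lipschitz_on UNIV (\<lambda>(t, s). (t, s + (t - s) * u))"
  proof (rule lipschitz_onI, clarsimp)
    fix t s t' s' :: real
    have "\<bar>t - t'\<bar> \<le> dist (t, s) (t', s')"
      using dist_fst_le[of "(t, s)" "(t', s')"] by (simp add: dist_real_def)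
    then show "dist (t, s + (t - s) * u) (t', s' + (t' - s') * u) \<le> 2 * dist (t, s) (t', s')"
      using dist_le[of t "s + (t - s) * u" t' "s' + (t' - s') * u"] fraction_le[of s t s' t'] by linarith
  qed simp
  show "2-lipschitz_on UNIV (\<lambda>(t, s). (s + (t - s) * u, s))"
  proof (rule lipschitz_onI, clarsimp)
    fix t s t' s' :: real
    have "\<bar>s - s'\<bar> \<le> dist (t, s) (t', s')"
      using dist_snd_le[of "(t, s)" "(t', s')"] by (simp add: dist_real_def)
    then show "dist (s + (t - s) * u, s) (s' + (t' - s') * u, s') \<le> 2 * dist (t, s) (t', s')"
      using dist_le[of "s + (t - s) * u" s "s' + (t' - s') * u" s'] fraction_le[of s t s' t'] by linarith
  qed simp
qed

definition product_at_fraction ::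
    "(real \<Rightarrow> real \<Rightarrow> real) \<Rightarrow> (real \<Rightarrow> real \<Rightarrow> real) \<Rightarrow> real \<Rightarrow> real \<times> real \<Rightarrow> real" where
  "product_at_fraction g\<^sub>1 g\<^sub>2 u = (\<lambda>(t, s). g\<^sub>1 t (s + (t - s) * u) * g\<^sub>2 (s + (t - s) * u) s)"

lemma holder_with_product_at_fraction:
  assumes g\<^sub>1: "holder_with K\<^sub>1 \<gamma> (CT T) (\<lambda>(t, s). g\<^sub>1 t s)" "0 \<le> M\<^sub>1" "\<And>t s. (t, s) \<in> CT T \<Longrightarrow> \<bar>g\<^sub>1 t s\<bar> \<le> M\<^sub>1"
    and g\<^sub>2: "holder_with K\<^sub>2 \<gamma> (CT T) (\<lambda>(t, s). g\<^sub>2 t s)" "0 \<le> M\<^sub>2" "\<And>t s. (t, s) \<in> CT T \<Longrightarrow> \<bar>g\<^sub>2 t s\<bar> \<le> M\<^sub>2"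
    and "0 \<le> \<gamma>" "0 < u" "u < 1"
  shows "holder_with (2 powr \<gamma> * (K\<^sub>1 * M\<^sub>2 + M\<^sub>1 * K\<^sub>2)) \<gamma> (CT T) (product_at_fraction g\<^sub>1 g\<^sub>2 u)"
proof -
  define \<phi> :: "real \<times> real \<Rightarrow> real \<times> real" where "\<phi> = (\<lambda>(t, s). (t, s + (t - s) * u))"
  define \<psi> :: "real \<times> real \<Rightarrow> real \<times> real" where "\<psi> = (\<lambda>(t, s). (s + (t - s) * u, s))"
  have maps: "\<phi> ` CT T \<subseteq> CT T" "\<psi> ` CT T \<subseteq> CT T"
    using segment_points_in_CT \<open>0 < u\<close> \<open>u < 1\<close> by (auto simp: \<phi>_def \<psi>_def)
  have "2-lipschitz_on (CT T) \<phi>" "2-lipschitz_on (CT T) \<psi>"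
    using lipschitz_segment_points[of u] \<open>0 < u\<close> \<open>u < 1\<close> unfolding \<phi>_def \<psi>_def
    by (auto intro: lipschitz_on_subset[of _ UNIV])
  then have "holder_with (K\<^sub>1 * 2 powr \<gamma>) \<gamma> (CT T) ((\<lambda>(t, s). g\<^sub>1 t s) \<circ> \<phi>)"
    and "holder_with (K\<^sub>2 * 2 powr \<gamma>) \<gamma> (CT T) ((\<lambda>(t, s). g\<^sub>2 t s) \<circ> \<psi>)"
    using holder_with_compose_lipschitz g\<^sub>1(1) g\<^sub>2(1) maps \<open>0 \<le> \<gamma>\<close> by blast+
  moreover have "\<bar>((\<lambda>(t, s). g\<^sub>1 t s) \<circ> \<phi>) x\<bar> \<le> M\<^sub>1" "\<bar>((\<lambda>(t, s). g\<^sub>2 t s) \<circ> \<psi>) x\<bar> \<le> M\<^sub>2"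
    if "x \<in> CT T" for x
    using maps that g\<^sub>1(3) g\<^sub>2(3) by (auto split: prod.splits)
  ultimately have "holder_with (K\<^sub>1 * 2 powr \<gamma> * M\<^sub>2 + M\<^sub>1 * (K\<^sub>2 * 2 powr \<gamma>)) \<gamma> (CT T)
      (\<lambda>x. ((\<lambda>(t, s). g\<^sub>1 t s) \<circ> \<phi>) x * ((\<lambda>(t, s). g\<^sub>2 t s) \<circ> \<psi>) x)"
    using holder_with_mult g\<^sub>1(2) g\<^sub>2(2) by blast
  moreover have "(\<lambda>x. ((\<lambda>(t, s). g\<^sub>1 t s) \<circ> \<phi>) x * ((\<lambda>(t, s). g\<^sub>2 t s) \<circ> \<psi>) x) = product_at_fraction g\<^sub>1 g\<^sub>2 u"
    by (auto simp: \<phi>_def \<psi>_def product_at_fraction_def)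
  ultimately show ?thesis
    by (simp add: algebra_simps)
qed

lemma integrable_product_at_fraction:
  assumes g\<^sub>1: "continuous_on (CT T) (\<lambda>(t, s). g\<^sub>1 t s)" "\<And>t s. (t, s) \<in> CT T \<Longrightarrow> \<bar>g\<^sub>1 t s\<bar> \<le> M\<^sub>1"
    and g\<^sub>2: "continuous_on (CT T) (\<lambda>(t, s). g\<^sub>2 t s)" "\<And>t s. (t, s) \<in> CT T \<Longrightarrow> \<bar>g\<^sub>2 t s\<bar> \<le> M\<^sub>2"
    and ts: "(t, s) \<in> CT T"
  shows "(\<lambda>u. product_at_fraction g\<^sub>1 g\<^sub>2 u (t, s) / sqrt (u * (1 - u))) integrable_on {0<..<1}"
proof (rule continuous_dominated_imp_integrable)
  have "continuous_on {0<..<1} (\<lambda>u. (\<lambda>(t, s). g\<^sub>1 t s) (t, s + (t - s) * u))"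
    by (rule continuous_on_compose2[OF g\<^sub>1(1)]) (auto intro!: continuous_intros segment_points_in_CT(1)[OF ts])
  moreover have "continuous_on {0<..<1} (\<lambda>u. (\<lambda>(t, s). g\<^sub>2 t s) (s + (t - s) * u, s))"
    by (rule continuous_on_compose2[OF g\<^sub>2(1)]) (auto intro!: continuous_intros segment_points_in_CT(2)[OF ts])
  ultimately show "continuous_on {0<..<1} (\<lambda>u. product_at_fraction g\<^sub>1 g\<^sub>2 u (t, s) / sqrt (u * (1 - u)))"
    unfolding product_at_fraction_def by (auto intro!: continuous_intros)
  show "(\<lambda>u. M\<^sub>1 * M\<^sub>2 * (1 / sqrt (u * (1 - u)))) integrable_on {0<..<1}"
    using integrable_on_cmult_left[OF arcsine_weight_integrable, of "M\<^sub>1 * M\<^sub>2"] by simp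
  fix u :: real assume u: "u \<in> {0<..<1}"
  have "\<bar>g\<^sub>1 t (s + (t - s) * u)\<bar> \<le> M\<^sub>1" "\<bar>g\<^sub>2 (s + (t - s) * u) s\<bar> \<le> M\<^sub>2"
    using g\<^sub>1(2) g\<^sub>2(2) segment_points_in_CT[OF ts] u by auto
  then have "\<bar>g\<^sub>1 t (s + (t - s) * u)\<bar> * \<bar>g\<^sub>2 (s + (t - s) * u) s\<bar> / sqrt (u * (1 - u))
      \<le> M\<^sub>1 * M\<^sub>2 / sqrt (u * (1 - u))"
    using u by (intro divide_right_mono mult_mono) auto
  then show "\<bar>product_at_fraction g\<^sub>1 g\<^sub>2 u (t, s) / sqrt (u * (1 - u))\<bar> \<le> M\<^sub>1 * M\<^sub>2 * (1 / sqrt (u * (1 - u)))"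
    using u by (simp add: product_at_fraction_def abs_mult)
qed (simp add: borel_open)

theorem lemma3p13:
  fixes T \<gamma> :: real and g1 g2 :: "real \<Rightarrow> real \<Rightarrow> real"
  assumes "T > 0" and "0 < \<gamma>" and "\<gamma> \<le> 1"
    and "holder_on \<gamma> (CT T) (\<lambda>(t, s). g1 t s)"
    and "holder_on \<gamma> (CT T) (\<lambda>(t, s). g2 t s)"
  shows "holder_on \<gamma> (CT T)
           (\<lambda>(t, s). integral {s..t} (\<lambda>z. g1 t z * g2 z s / (sqrt (t - z) * sqrt (z - s))))"
proof -
  let ?h = "\<lambda>(t, s). integral {s..t} (\<lambda>z. g1 t z * g2 z s / (sqrt (t - z) * sqrt (z - s)))"
  let ?P = "product_at_fraction g1 g2" and ?W = "\<lambda>u. 1 / sqrt (u * (1 - u))"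
  let ?I = "\<lambda>x. integral {0<..<1} (\<lambda>u. ?P u x * ?W u)"
  obtain K\<^sub>1 K\<^sub>2 where K: "holder_with K\<^sub>1 \<gamma> (CT T) (\<lambda>(t, s). g1 t s)" "holder_with K\<^sub>2 \<gamma> (CT T) (\<lambda>(t, s). g2 t s)"
    using assms(4,5) by (auto simp: holder_on_iff_holder_with)
  obtain M\<^sub>1 where M\<^sub>1: "0 \<le> M\<^sub>1" "\<And>t s. (t, s) \<in> CT T \<Longrightarrow> \<bar>g1 t s\<bar> \<le> M\<^sub>1"
    using holder_with_imp_bounded[OF K(1) bounded_CT] assms(2) by (metis case_prod_conv less_imp_le)
  obtain M\<^sub>2 where M\<^sub>2: "0 \<le> M\<^sub>2" "\<And>t s. (t, s) \<in> CT T \<Longrightarrow> \<bar>g2 t s\<bar> \<le> M\<^sub>2"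
    using holder_with_imp_bounded[OF K(2) bounded_CT] assms(2) by (metis case_prod_conv less_imp_le)
  have integrable: "(\<lambda>u. ?P u x * ?W u) integrable_on {0<..<1}" if "x \<in> CT T" for x
    using integrable_product_at_fraction[OF holder_with_imp_continuous_on[OF K(1)] M\<^sub>1(2)
        holder_with_imp_continuous_on[OF K(2)] M\<^sub>2(2)] that assms(2) by (cases x) simp
  have holder: "holder_with (2 powr \<gamma> * (K\<^sub>1 * M\<^sub>2 + M\<^sub>1 * K\<^sub>2)) \<gamma> (CT T) (?P u)" if "u \<in> {0<..<1}" for u
    using holder_with_product_at_fraction[OF K(1) M\<^sub>1 K(2) M\<^sub>2] that assms(2) by simp
  have "holder_with (2 powr \<gamma> * (K\<^sub>1 * M\<^sub>2 + M\<^sub>1 * K\<^sub>2) * integral {0<..<1} ?W) \<gamma> (CT T) ?I"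
    using holder_with_nonneg[OF holder[of "1 / 2"]]
    by (intro holder_with_weighted_integral[OF arcsine_weight_integrable _ integrable holder]) auto
  moreover have "?h x = ?I x" if "x \<in> CT T" for x
    using integral_arcsine_substitution[of "snd x" "fst x" "\<lambda>z. g1 (fst x) z * g2 z (snd x)"]
      integrable[OF that] that
    by (cases x) (simp add: CT_def product_at_fraction_def)
  ultimately show ?thesis
    unfolding holder_on_iff_holder_with using holder_with_cong[of "CT T" ?h ?I] by blast
qed

end
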